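(* Let $n\ge 2$ and $q\in\{2,3\}$. Then ${\rm SL}(n,q)$ (which equals ${\rm GL}(n,2)$ when $q=2$) is generated by $x_{12}(1)=I+E_{12}$ and the $n\times n$ matrix $w$ with entry $1$ in position $(1,n)$, entry $-1$ in positions $(i+1,i)$ for $1\le i\le n-1$, and $0$ elsewhere.
   Context: $E_{ij}$ denotes the square matrix with $1$ in position $(i,j)$ and $0$ elsewhere; $x_{ij}(\alpha)=I+\alpha E_{ij}$ for $i\ne j$. *)

theory Defs
  imports "Jordan_Normal_Form.Determinant" "Berlekamp_Zassenhaus.Finite_Field"
begin

text \<open>Matrices are 0-indexed in Jordan_Normal_Form: paper position (i,j) is (i-1,j-1).\<close>

definition SL :: "nat \<Rightarrow> ('a::comm_ring_1) mat set" where
  "SL n = {A \<in> carrier_mat n n. det A = 1}"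

inductive_set mat_gen :: "nat \<Rightarrow> ('a::comm_ring_1) mat set \<Rightarrow> 'a mat set"
  for n :: nat and S :: "'a mat set" where
  one: "1\<^sub>m n \<in> mat_gen n S"
| gen: "A \<in> S \<Longrightarrow> A \<in> mat_gen n S"
| inv: "A \<in> S \<Longrightarrow> B \<in> carrier_mat n n \<Longrightarrow> A * B = 1\<^sub>m n \<Longrightarrow> B \<in> mat_gen n S"
| mult: "A \<in> mat_gen n S \<Longrightarrow> B \<in> mat_gen n S \<Longrightarrow> A * B \<in> mat_gen n S"

definition elem_x :: "nat \<Rightarrow> nat \<Rightarrow> nat \<Rightarrow> ('a::comm_ring_1) \<Rightarrow> 'a mat" where
  "elem_x n i j a = mat n n (\<lambda>(k,l). (if k = l then 1 else 0) + (if k = i \<and> l = j then a else 0))"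

definition w_mat :: "nat \<Rightarrow> ('a::comm_ring_1) mat" where
  "w_mat n = mat n n (\<lambda>(k,l). if k = 0 \<and> l = n - 1 then 1 else if k = l + 1 then -1 else 0)"

end

theory Submission
  imports Defs
begin

text \<open>Conjugation by \<open>w\<close> permutes the transvections cyclically:
  \<open>w x_ij(a) w^-1 = x_(i+1)(j+1)(\<plusminus>a)\<close>, indices mod \<open>n\<close>. Over a prime field the powers of
  \<open>x_12(1)\<close> are all \<open>x_12(a)\<close>; conjugating gives every \<open>x_i(i+1)(a)\<close> and \<open>x_n1(a)\<close>, and the
  commutator identity \<open>[x_ij(a), x_jk(1)] = x_ik(a)\<close> then gives every transvection. These
  generate \<open>SL(n)\<close> by Gaussian elimination, and both generators have determinant 1.\<close>

section \<open>Elementary matrices\<close>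

lemma square_mult_carrier_mat [simp]:
  "A \<in> carrier_mat n n \<Longrightarrow> B \<in> carrier_mat n n \<Longrightarrow> A * B \<in> carrier_mat n n"
  by (rule mult_carrier_mat)

lemma elem_x_carrier [simp]: "elem_x n i j a \<in> carrier_mat n n"
  by (simp add: elem_x_def)

lemma elem_x_dim [simp]: "dim_row (elem_x n i j a) = n" "dim_col (elem_x n i j a) = n"
  by (simp_all add: elem_x_def)

lemma index_elem_x [simp]:
  "r < n \<Longrightarrow> c < n \<Longrightarrow>
    elem_x n i j a $$ (r,c) = (if r = c then 1 else 0) + (if r = i \<and> c = j then a else 0)"
  by (simp add: elem_x_def)

lemma index_elem_x_mult:
  assumes "A \<in> carrier_mat n n" and "j < n" "r < n" "c < n"
  shows "(elem_x n i j a * A) $$ (r,c) = A $$ (r,c) + (if r = i then a * A $$ (j,c) else 0)"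
  using assms
  by (simp add: scalar_prod_def distrib_right sum.distrib if_distrib[of "\<lambda>x. x * _"] cong: if_cong)

lemma elem_x_mult_elem_x:
  assumes "i \<noteq> j" "i < n" "j < n"
  shows "elem_x n i j a * elem_x n i j b = elem_x n i j (a + b)"
  by (rule eq_matI)
    (use assms in \<open>auto simp: index_elem_x_mult algebra_simps simp del: index_mult_mat(1)\<close>)

lemma elem_x_0: "elem_x n i j 0 = 1\<^sub>m n"
  by (rule eq_matI) auto

lemma elem_x_commutator:
  assumes "i \<noteq> j" "j \<noteq> k" "i \<noteq> k" "i < n" "j < n" "k < n"
  shows "elem_x n i j a * (elem_x n j k b * (elem_x n i j (-a) * elem_x n j k (-b))) =
    elem_x n i k (a * b)"
  by (rule eq_matI)
    (use assms in \<open>auto simp: index_elem_x_mult algebra_simps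
      simp del: index_mult_mat(1)\<close>)

lemma det_elem_x:
  assumes "i \<noteq> j" "i < n" "j < n"
  shows "det (elem_x n i j a) = 1"
proof -
  have "det (elem_x n i j a) = prod_list (diag_mat (elem_x n i j a))"
  proof (cases "i < j")
    case True
    then show ?thesis by (intro det_upper_triangular upper_triangularI) auto
  next
    case False
    then show ?thesis by (intro det_lower_triangular[of n]) auto
  qed
  also have "\<dots> = 1"
    unfolding prod_list_diag_prod using assms by (intro prod.neutral) auto
  finally show ?thesis .
qed

lemma det_elem_x_mult:
  assumes "i \<noteq> j" "i < n" "j < n" "A \<in> carrier_mat n n"
  shows "det (elem_x n i j a * A) = det A"
  using det_mult[OF elem_x_carrier[of n i j a] assms(4)] det_elem_x[OF assms(1-3), of a] by simp

section \<open>The matrix \<open>w\<close>\<close>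

definition cyc_succ :: "nat \<Rightarrow> nat \<Rightarrow> nat" where
  "cyc_succ n i = (if i = n - 1 then 0 else i + 1)"

definition cyc_pred :: "nat \<Rightarrow> nat \<Rightarrow> nat" where
  "cyc_pred n i = (if i = 0 then n - 1 else i - 1)"

text \<open>The nonzero entry of row \<open>r\<close> of \<open>w\<close>.\<close>
definition w_sign :: "nat \<Rightarrow> 'a::comm_ring_1" where
  "w_sign r = (if r = 0 then 1 else -1)"

lemma cyc_succ_less: "n \<ge> 2 \<Longrightarrow> i < n \<Longrightarrow> cyc_succ n i < n"
  by (auto simp: cyc_succ_def)

lemma cyc_pred_less: "n \<ge> 2 \<Longrightarrow> i < n \<Longrightarrow> cyc_pred n i < n"
  by (auto simp: cyc_pred_def)

lemma cyc_pred_eq_iff: "n \<ge> 2 \<Longrightarrow> i < n \<Longrightarrow> j < n \<Longrightarrow> (cyc_pred n i = j) = (i = cyc_succ n j)"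
  by (auto simp: cyc_pred_def cyc_succ_def)

lemma cyc_succ_inj: "n \<ge> 2 \<Longrightarrow> i < n \<Longrightarrow> j < n \<Longrightarrow> (cyc_succ n i = cyc_succ n j) = (i = j)"
  by (auto simp: cyc_succ_def)

lemma cyc_pred_inj: "n \<ge> 2 \<Longrightarrow> i < n \<Longrightarrow> j < n \<Longrightarrow> (cyc_pred n i = cyc_pred n j) = (i = j)"
  by (auto simp: cyc_pred_def)

lemma w_sign_square [simp]: "w_sign r * w_sign r = (1::'a::comm_ring_1)"
  by (simp add: w_sign_def)

lemma w_mat_carrier [simp]: "w_mat n \<in> carrier_mat n n"
  by (simp add: w_mat_def)

lemma w_mat_dim [simp]: "dim_row (w_mat n) = n" "dim_col (w_mat n) = n"
  by (simp_all add: w_mat_def)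

lemma index_w_mat:
  "n \<ge> 2 \<Longrightarrow> r < n \<Longrightarrow> c < n \<Longrightarrow> w_mat n $$ (r,c) = (if c = cyc_pred n r then w_sign r else 0)"
  by (auto simp: w_mat_def cyc_pred_def w_sign_def)

lemma index_w_mat_mult:
  assumes "n \<ge> 2" "A \<in> carrier_mat n n" "r < n" "c < n"
  shows "(w_mat n * A) $$ (r,c) = w_sign r * A $$ (cyc_pred n r, c)"
  using assms cyc_pred_less[OF assms(1,3)]
  by (simp add: scalar_prod_def index_w_mat if_distrib[of "\<lambda>x. x * _"] cong: if_cong)

lemma index_mult_w_mat:
  assumes "n \<ge> 2" "A \<in> carrier_mat n n" "r < n" "c < n"
  shows "(A * w_mat n) $$ (r,c) = A $$ (r, cyc_succ n c) * w_sign (cyc_succ n c)"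
proof -
  have "\<And>l. l < n \<Longrightarrow> (c = cyc_pred n l) = (l = cyc_succ n c)"
    using assms by (auto simp: cyc_pred_def cyc_succ_def)
  then show ?thesis
    using assms cyc_succ_less[OF assms(1,4)]
    by (simp add: scalar_prod_def index_w_mat if_distrib[of "\<lambda>x. _ * x"] cong: if_cong)
qed

lemma w_mat_mult_elem_x:
  assumes "n \<ge> 2" "i \<noteq> j" "i < n" "j < n"
  shows "w_mat n * elem_x n i j a =
    elem_x n (cyc_succ n i) (cyc_succ n j) (w_sign (cyc_succ n i) * w_sign (cyc_succ n j) * a) * w_mat n"
    (is "_ = ?E * _")
proof (rule eq_matI)
  fix r c assume "r < dim_row (?E * w_mat n)" "c < dim_col (?E * w_mat n)"
  then have r: "r < n" and c: "c < n" by auto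
  have lhs: "(w_mat n * elem_x n i j a) $$ (r,c) =
      w_sign r * ((if r = cyc_succ n c then 1 else 0) + (if r = cyc_succ n i \<and> c = j then a else 0))"
    using assms r c by (simp add: index_w_mat_mult cyc_pred_less cyc_pred_eq_iff del: index_mult_mat(1))
  have rhs: "(?E * w_mat n) $$ (r,c) = ((if r = cyc_succ n c then 1 else 0) +
      (if r = cyc_succ n i \<and> c = j then w_sign (cyc_succ n i) * w_sign (cyc_succ n j) * a else 0)) *
      w_sign (cyc_succ n c)"
    using assms r c by (simp add: index_mult_w_mat cyc_succ_less cyc_succ_inj del: index_mult_mat(1))
  show "(w_mat n * elem_x n i j a) $$ (r,c) = (?E * w_mat n) $$ (r,c)"
    unfolding lhs rhs by (auto simp: algebra_simps w_sign_def)
qed auto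

lemma w_mat_mult_transpose:
  assumes "n \<ge> 2"
  shows "w_mat n * (w_mat n)\<^sup>T = (1\<^sub>m n :: 'a::comm_ring_1 mat)"
proof (rule eq_matI)
  fix r c assume "r < dim_row (1\<^sub>m n :: 'a mat)" "c < dim_col (1\<^sub>m n :: 'a mat)"
  then have r: "r < n" and c: "c < n" by auto
  have "(w_mat n * (w_mat n)\<^sup>T) $$ (r,c) = w_sign r * (w_mat n $$ (c, cyc_pred n r) :: 'a)"
    using assms r c by (simp add: index_w_mat_mult cyc_pred_less del: index_mult_mat(1))
  also have "\<dots> = (if r = c then 1 else 0)"
    using assms r c by (simp add: index_w_mat cyc_pred_less cyc_pred_inj)
  finally show "(w_mat n * (w_mat n)\<^sup>T) $$ (r,c) = (1\<^sub>m n :: 'a mat) $$ (r,c)"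
    using r c by simp
qed auto

lemma det_w_mat:
  assumes "n \<ge> 2"
  shows "det (w_mat n :: 'a::comm_ring_1 mat) = 1"
proof -
  have "det (w_mat n :: 'a mat) = (\<Sum>j<n. w_mat n $$ (0,j) * cofactor (w_mat n) 0 j)"
    by (rule laplace_expansion_row) (use assms in auto)
  also have "\<dots> = (\<Sum>j<n. if j = n - 1 then cofactor (w_mat n :: 'a mat) 0 (n - 1) else 0)"
    by (rule sum.cong[OF refl]) (use assms in \<open>auto simp: index_w_mat cyc_pred_def w_sign_def\<close>)
  also have "\<dots> = cofactor (w_mat n :: 'a mat) 0 (n - 1)"
    using assms by simp
  also have "mat_delete (w_mat n :: 'a mat) 0 (n - 1) = (-1) \<cdot>\<^sub>m 1\<^sub>m (n - 1)"
    by (rule eq_matI) (use assms in \<open>auto simp: mat_delete_def index_w_mat cyc_pred_def w_sign_def\<close>)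
  then have "cofactor (w_mat n :: 'a mat) 0 (n - 1) = (-1) ^ (n - 1) * (-1) ^ (n - 1)"
    unfolding cofactor_def by simp
  also have "\<dots> = 1"
    by (simp add: power_mult_distrib[symmetric])
  finally show ?thesis .
qed

section \<open>Generated subgroups\<close>

lemma mat_gen_subset_SL:
  assumes "S \<subseteq> SL n"
  shows "mat_gen n S \<subseteq> SL n"
proof
  fix A assume "A \<in> mat_gen n S"
  then show "A \<in> SL n"
  proof (induction rule: mat_gen.induct)
    case (inv A B)
    then have "det A * det B = 1"
      using assms det_mult[of A n B] by (auto simp: SL_def)
    with inv assms show ?case by (auto simp: SL_def)
  qed (use assms in \<open>auto simp: SL_def det_mult\<close>)
qed

lemma mat_gen_transpose_w_mat:
  "n \<ge> 2 \<Longrightarrow> w_mat n \<in> S \<Longrightarrow> (w_mat n)\<^sup>T \<in> mat_gen n S"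
  by (rule mat_gen.inv[of "w_mat n"]) (auto simp: w_mat_mult_transpose)

lemma elem_x_of_nat_in_mat_gen:
  fixes S :: "'a::comm_ring_1 mat set"
  assumes "i \<noteq> j" "i < n" "j < n" "elem_x n i j 1 \<in> mat_gen n S"
  shows "elem_x n i j (of_nat k) \<in> mat_gen n S"
proof (induction k)
  case 0
  then show ?case by (simp add: elem_x_0 mat_gen.one)
next
  case (Suc k)
  have "elem_x n i j (of_nat (Suc k)) = elem_x n i j (of_nat k + 1 :: 'a)"
    by (simp add: add.commute)
  also have "\<dots> = elem_x n i j (of_nat k) * elem_x n i j 1"
    by (rule elem_x_mult_elem_x[OF assms(1-3), symmetric])
  finally show ?case
    using mat_gen.mult[OF Suc assms(4)] by (simp only:)
qed

lemma elem_x_range_in_mat_gen_commutator: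
  fixes S :: "'a::comm_ring_1 mat set"
  assumes "i \<noteq> j" "j \<noteq> k" "i \<noteq> k" "i < n" "j < n" "k < n"
    and "range (elem_x n i j) \<subseteq> mat_gen n S" "range (elem_x n j k) \<subseteq> mat_gen n S"
  shows "range (elem_x n i k) \<subseteq> mat_gen n S"
proof clarify
  fix c :: 'a
  have "elem_x n i k c = elem_x n i j c * (elem_x n j k 1 * (elem_x n i j (-c) * elem_x n j k (-1)))"
    using elem_x_commutator[OF assms(1-6), of c 1] by simp
  with assms(7,8) show "elem_x n i k c \<in> mat_gen n S"
    by (simp add: image_subset_iff mat_gen.mult)
qed

lemma elem_x_range_in_mat_gen_shift:
  fixes S :: "'a::comm_ring_1 mat set"
  assumes "n \<ge> 2" "i \<noteq> j" "i < n" "j < n" "w_mat n \<in> S"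
    and "range (elem_x n i j) \<subseteq> mat_gen n S"
  shows "range (elem_x n (cyc_succ n i) (cyc_succ n j)) \<subseteq> mat_gen n S"
proof clarify
  fix b :: 'a
  define a where "a = w_sign (cyc_succ n i) * w_sign (cyc_succ n j) * b"
  have "w_sign (cyc_succ n i) * w_sign (cyc_succ n j) * a = b"
    unfolding a_def by (simp add: w_sign_def)
  then have "w_mat n * elem_x n i j a * (w_mat n)\<^sup>T =
      elem_x n (cyc_succ n i) (cyc_succ n j) b * w_mat n * (w_mat n)\<^sup>T"
    using w_mat_mult_elem_x[OF assms(1-4), of a] by simp
  also have "\<dots> = elem_x n (cyc_succ n i) (cyc_succ n j) b * (w_mat n * (w_mat n)\<^sup>T)"
    by (rule assoc_mult_mat[of _ n n _ n _ n]) auto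
  also have "\<dots> = elem_x n (cyc_succ n i) (cyc_succ n j) b"
    using w_mat_mult_transpose[OF assms(1), where 'a='a] by simp
  finally have "elem_x n (cyc_succ n i) (cyc_succ n j) b = w_mat n * elem_x n i j a * (w_mat n)\<^sup>T" ..
  with assms show "elem_x n (cyc_succ n i) (cyc_succ n j) b \<in> mat_gen n S"
    by (metis mat_gen.gen mat_gen.mult mat_gen_transpose_w_mat range_subsetD)
qed

definition transvections :: "nat \<Rightarrow> 'a::comm_ring_1 mat set" where
  "transvections n = {elem_x n i j a | i j a. i \<noteq> j \<and> i < n \<and> j < n}"

lemma transvections_subset_mat_gen_w_mat:
  fixes S :: "'a::comm_ring_1 mat set"
  assumes n: "n \<ge> 2" and w: "w_mat n \<in> S" and x01: "range (elem_x n 0 1) \<subseteq> mat_gen n S"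
  shows "transvections n \<subseteq> mat_gen n S"
proof -
  have superdiag: "range (elem_x n k (Suc k)) \<subseteq> mat_gen n S" if "Suc k < n" for k
    using that
  proof (induction k)
    case 0
    then show ?case using x01 by simp
  next
    case (Suc k)
    have "range (elem_x n (cyc_succ n k) (cyc_succ n (Suc k))) \<subseteq> mat_gen n S"
      using Suc n w by (intro elem_x_range_in_mat_gen_shift) auto
    moreover have "cyc_succ n k = Suc k" "cyc_succ n (Suc k) = Suc (Suc k)"
      using Suc by (auto simp: cyc_succ_def)
    ultimately show ?case by simp
  qed
  have corner: "range (elem_x n (n - 1) 0) \<subseteq> mat_gen n S"
  proof -
    have "range (elem_x n (cyc_succ n (n - 2)) (cyc_succ n (n - 1))) \<subseteq> mat_gen n S"
      using superdiag[of "n - 2"] n w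
      by (intro elem_x_range_in_mat_gen_shift) (auto simp: Suc_diff_Suc numeral_2_eq_2)
    moreover have "cyc_succ n (n - 2) = n - 1" "cyc_succ n (n - 1) = 0"
      using n by (auto simp: cyc_succ_def)
    ultimately show ?thesis by simp
  qed
  have upper: "range (elem_x n i j) \<subseteq> mat_gen n S" if "i < j" "j < n" for i j
    using that
  proof (induction j)
    case 0
    then show ?case by simp
  next
    case (Suc j)
    show ?case
    proof (cases "i = j")
      case True
      with Suc superdiag show ?thesis by simp
    next
      case False
      with Suc superdiag[of j] show ?thesis
        by (intro elem_x_range_in_mat_gen_commutator[of i j "Suc j"]) auto
    qed
  qed
  have first_col: "range (elem_x n i 0) \<subseteq> mat_gen n S" if "0 < i" "i < n" for i
  proof (cases "i = n - 1")
    case True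
    with corner show ?thesis by simp
  next
    case False
    with that upper[of i "n - 1"] corner show ?thesis
      by (intro elem_x_range_in_mat_gen_commutator[of i "n - 1" 0]) auto
  qed
  have "range (elem_x n i j) \<subseteq> mat_gen n S" if ij: "i \<noteq> j" "i < n" "j < n" for i j
  proof -
    consider "i < j" | "j = 0" "0 < i" | "0 < j" "j < i"
      using ij by linarith
    then show ?thesis
    proof cases
      case 1
      with upper ij show ?thesis by simp
    next
      case 2
      with first_col ij show ?thesis by simp
    next
      case 3
      with first_col[of i] upper[of 0 j] ij show ?thesis
        by (intro elem_x_range_in_mat_gen_commutator[of i 0 j]) auto
    qed
  qed
  then show ?thesis
    unfolding transvections_def by blast
qed

section \<open>Gaussian elimination\<close>

definition id_cols :: "nat \<Rightarrow> nat \<Rightarrow> 'a::comm_ring_1 mat \<Rightarrow> bool" where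
  "id_cols n k A = (\<forall>i<n. \<forall>c<k. A $$ (i,c) = (if i = c then 1 else 0))"

lemma id_cols_elem_x_mult:
  assumes "A \<in> carrier_mat n n" "id_cols n k A" "k \<le> j" "j < n" "i < n"
  shows "id_cols n k (elem_x n i j a * A)"
  using assms unfolding id_cols_def by (auto simp: index_elem_x_mult simp del: index_mult_mat(1))

text \<open>Column \<open>k\<close> then lies in the span of the earlier columns, which are unit vectors.\<close>
lemma det_id_cols_zero_below:
  fixes A :: "'a::comm_ring_1 mat"
  assumes A: "A \<in> carrier_mat n n" and id: "id_cols n k A" and k: "k < n"
    and zero: "\<And>r. k \<le> r \<Longrightarrow> r < n \<Longrightarrow> A $$ (r,k) = 0"
  shows "det A = 0"
proof -
  define B :: "'a mat" where
    "B = mat n n (\<lambda>(i,j). (if i = j then 1 else 0) - (if j = k \<and> i < k then A $$ (i,k) else 0))"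
  have B: "B \<in> carrier_mat n n"
    unfolding B_def by simp
  have "upper_triangular B"
    unfolding B_def by (rule upper_triangularI) auto
  moreover have "prod_list (diag_mat B) = 1"
    unfolding prod_list_diag_prod B_def by (intro prod.neutral) auto
  ultimately have det_B: "det B = 1"
    using det_upper_triangular[OF _ B] by simp
  have col_k: "(A * B) $$ (r,k) = 0" if r: "r < n" for r
  proof -
    have "(A * B) $$ (r,k) = (\<Sum>l = 0..<n. A $$ (r,l) * B $$ (l,k))"
      using A B r k by (simp add: scalar_prod_def)
    also have "\<dots> = (\<Sum>l = 0..<n. (if l = k then A $$ (r,l) else 0) -
        (if l = r \<and> r < k then A $$ (r,k) else 0))"
      by (rule sum.cong[OF refl]) (use k r id in \<open>auto simp: B_def id_cols_def\<close>)
    also have "\<dots> = A $$ (r,k) - (if r < k then A $$ (r,k) else 0)"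
      using r k by (simp add: sum_subtractf)
    also have "\<dots> = 0"
      using zero r by auto
    finally show ?thesis .
  qed
  have "det (A * B) = (\<Sum>i<n. (A * B) $$ (i,k) * cofactor (A * B) i k)"
    by (rule laplace_expansion_column) (use A B k in auto)
  also have "\<dots> = 0"
    using col_k by simp
  finally show ?thesis
    using det_mult[OF A B] det_B by simp
qed

lemma det_id_cols_last:
  fixes A :: "'a::comm_ring_1 mat"
  assumes A: "A \<in> carrier_mat n n" and id: "id_cols n (n - 1) A" and n: "n > 0"
  shows "det A = A $$ (n - 1, n - 1)"
proof -
  have "upper_triangular A"
    using id A unfolding id_cols_def by auto
  then have "det A = (\<Prod>i = 0..<n. A $$ (i,i))"
    using det_upper_triangular[OF _ A] A by (simp add: prod_list_diag_prod)
  also have "\<dots> = (\<Prod>i = 0..<n - 1. A $$ (i,i)) * A $$ (n - 1, n - 1)"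
    using n by (metis Suc_pred' prod.atLeast0_lessThan_Suc)
  also have "(\<Prod>i = 0..<n - 1. A $$ (i,i)) = 1"
    using id n unfolding id_cols_def by (intro prod.neutral) auto
  finally show ?thesis by simp
qed

context
  fixes n :: nat and S :: "'a::field mat set"
  assumes transvections: "transvections n \<subseteq> mat_gen n S"
begin

lemma elem_x_in_mat_gen: "i \<noteq> j \<Longrightarrow> i < n \<Longrightarrow> j < n \<Longrightarrow> elem_x n i j a \<in> mat_gen n S"
  using transvections unfolding transvections_def by blast

lemma mat_gen_elem_x_mult_cancel:
  assumes ij: "i \<noteq> j" "i < n" "j < n" and A: "A \<in> carrier_mat n n"
    and in_gen: "elem_x n i j a * A \<in> mat_gen n S"
  shows "A \<in> mat_gen n S"
proof -
  have "elem_x n i j (-a) * (elem_x n i j a * A) = elem_x n i j (-a) * elem_x n i j a * A"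
    by (rule assoc_mult_mat[symmetric, of _ n n _ n _ n]) (use A in auto)
  also have "\<dots> = A"
    using elem_x_mult_elem_x[OF ij, of "-a" a] A by (simp add: elem_x_0)
  finally show ?thesis
    using mat_gen.mult[OF elem_x_in_mat_gen[OF ij] in_gen] by metis
qed

text \<open>Clearing column \<open>k\<close>, given that matrices agreeing with the identity on one more column are generated.\<close>
context
  fixes k :: nat
  assumes k: "k < n"
    and next_col: "\<And>A. A \<in> carrier_mat n n \<Longrightarrow> det A = 1 \<Longrightarrow> id_cols n (Suc k) A \<Longrightarrow> A \<in> mat_gen n S"
begin

lemma unit_pivot_in_mat_gen:
  "A \<in> carrier_mat n n \<Longrightarrow> det A = 1 \<Longrightarrow> id_cols n k A \<Longrightarrow> A $$ (k,k) = 1 \<Longrightarrow>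
    (\<forall>i. m \<le> i \<longrightarrow> i < n \<longrightarrow> i \<noteq> k \<longrightarrow> A $$ (i,k) = 0) \<Longrightarrow> A \<in> mat_gen n S"
proof (induction m arbitrary: A)
  case 0
  then have "id_cols n (Suc k) A"
    unfolding id_cols_def by (auto simp: less_Suc_eq)
  with 0 show ?case by (blast intro: next_col)
next
  case (Suc m A)
  show ?case
  proof (cases "m < n \<and> m \<noteq> k \<and> A $$ (m,k) \<noteq> 0")
    case False
    then have "\<forall>i. m \<le> i \<longrightarrow> i < n \<longrightarrow> i \<noteq> k \<longrightarrow> A $$ (i,k) = 0"
      using Suc.prems(5) by (metis le_antisym not_less_eq_eq)
    with Suc show ?thesis by blast
  next
    case True
    define A' where "A' = elem_x n m k (- A $$ (m,k)) * A"
    have A'_index: "A' $$ (i,c) = A $$ (i,c) + (if i = m then - A $$ (m,k) * A $$ (k,c) else 0)"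
      if "i < n" "c < n" for i c
      unfolding A'_def using that k Suc.prems by (simp add: index_elem_x_mult del: index_mult_mat(1))
    have "A' \<in> mat_gen n S"
    proof (rule Suc.IH)
      show "A' \<in> carrier_mat n n"
        unfolding A'_def using Suc.prems by simp
      show "det A' = 1"
        unfolding A'_def using True k Suc.prems by (simp add: det_elem_x_mult)
      show "id_cols n k A'"
        unfolding A'_def by (rule id_cols_elem_x_mult) (use True k Suc.prems in auto)
      show "A' $$ (k,k) = 1"
        using A'_index[OF k k] True Suc.prems by simp
      show "\<forall>i. m \<le> i \<longrightarrow> i < n \<longrightarrow> i \<noteq> k \<longrightarrow> A' $$ (i,k) = 0"
      proof (intro allI impI)
        fix i assume i: "m \<le> i" "i < n" "i \<noteq> k"
        show "A' $$ (i,k) = 0"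
          using A'_index[OF i(2) k] Suc.prems(4,5) i by (cases "i = m") auto
      qed
    qed
    then show ?thesis
      unfolding A'_def by (rule mat_gen_elem_x_mult_cancel[rotated 4]) (use True k Suc.prems in auto)
  qed
qed

lemma nonzero_subdiagonal_in_mat_gen:
  assumes A: "A \<in> carrier_mat n n" "det A = 1" "id_cols n k A"
    and k1: "Suc k < n" and nz: "A $$ (Suc k, k) \<noteq> 0"
  shows "A \<in> mat_gen n S"
proof -
  define A' where "A' = elem_x n k (Suc k) ((1 - A $$ (k,k)) / A $$ (Suc k, k)) * A"
  have "A' \<in> mat_gen n S"
  proof (rule unit_pivot_in_mat_gen[of _ n])
    show "A' \<in> carrier_mat n n"
      unfolding A'_def using A by simp
    show "det A' = 1"
      unfolding A'_def using k1 A by (simp add: det_elem_x_mult)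
    show "id_cols n k A'"
      unfolding A'_def by (rule id_cols_elem_x_mult) (use k1 A in auto)
    show "A' $$ (k,k) = 1"
      unfolding A'_def using k1 A nz by (simp add: index_elem_x_mult del: index_mult_mat(1))
  qed simp
  then show ?thesis
    unfolding A'_def by (rule mat_gen_elem_x_mult_cancel[rotated 4]) (use k1 A in auto)
qed

lemma id_cols_in_mat_gen_step:
  assumes A: "A \<in> carrier_mat n n" "det A = 1" "id_cols n k A"
  shows "A \<in> mat_gen n S"
proof (cases "A $$ (k,k) = 1")
  case True
  with A show ?thesis
    using unit_pivot_in_mat_gen[of _ n] by simp
next
  case pivot: False
  show ?thesis
  proof (cases "Suc k < n")
    case False
    then have "k = n - 1"
      using k by simp
    then have "det A = A $$ (k,k)"
      using det_id_cols_last[of A n] A k by simp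
    with A pivot show ?thesis by simp
  next
    case k1: True
    show ?thesis
    proof (cases "A $$ (Suc k, k) = 0")
      case False
      with nonzero_subdiagonal_in_mat_gen A k1 show ?thesis by blast
    next
      case True
      obtain r where r: "k \<le> r" "r < n" "A $$ (r,k) \<noteq> 0"
        using det_id_cols_zero_below[OF A(1) A(3) k] A(2) by force
      with True have "r \<noteq> Suc k" by auto
      define A' where "A' = elem_x n (Suc k) r 1 * A"
      have "A' \<in> mat_gen n S"
      proof (rule nonzero_subdiagonal_in_mat_gen)
        show "A' \<in> carrier_mat n n"
          unfolding A'_def using A by simp
        show "det A' = 1"
          unfolding A'_def using k1 A r \<open>r \<noteq> Suc k\<close> by (simp add: det_elem_x_mult)
        show "id_cols n k A'"
          unfolding A'_def by (rule id_cols_elem_x_mult) (use k1 A r in auto)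
        show "A' $$ (Suc k, k) \<noteq> 0"
          unfolding A'_def using k1 A r True by (simp add: index_elem_x_mult del: index_mult_mat(1))
      qed fact
      then show ?thesis
        unfolding A'_def
        by (rule mat_gen_elem_x_mult_cancel[rotated 4]) (use k1 A r \<open>r \<noteq> Suc k\<close> in auto)
    qed
  qed
qed

end

lemma SL_subset_mat_gen: "SL n \<subseteq> mat_gen n S"
proof -
  have "\<forall>A. A \<in> carrier_mat n n \<longrightarrow> det A = 1 \<longrightarrow> id_cols n k A \<longrightarrow> A \<in> mat_gen n S"
    if "k \<le> n" for k
    using that
  proof (induction k rule: inc_induct)
    case base
    have "A = 1\<^sub>m n" if "A \<in> carrier_mat n n" "id_cols n n A" for A :: "'a mat"
      using that unfolding id_cols_def by (intro eq_matI) auto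
    then show ?case by (metis mat_gen.one)
  next
    case (step k)
    then show ?case
      using id_cols_in_mat_gen_step[of k] by simp
  qed
  from this[of 0] show ?thesis
    unfolding SL_def id_cols_def by blast
qed

end

theorem mainTheorem3:
  fixes n :: nat
  assumes "n \<ge> 2" and "CARD('p::prime_card) \<in> {2, 3}"
  shows "mat_gen n {elem_x n 0 1 (1 :: 'p mod_ring), w_mat n} = (SL n :: 'p mod_ring mat set)"
proof
  let ?S = "{elem_x n 0 1 (1 :: 'p mod_ring), w_mat n}"
  show "mat_gen n ?S \<subseteq> SL n"
    using assms(1) by (intro mat_gen_subset_SL) (auto simp: SL_def det_elem_x det_w_mat)
  have "range (elem_x n 0 1) \<subseteq> mat_gen n ?S"
  proof clarify
    fix a :: "'p mod_ring"
    obtain k where "a = of_nat k"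
      using surj_of_nat_mod_ring by blast
    with assms(1) show "elem_x n 0 1 a \<in> mat_gen n ?S"
      by (auto intro: elem_x_of_nat_in_mat_gen mat_gen.gen)
  qed
  with assms(1) have "transvections n \<subseteq> mat_gen n ?S"
    by (intro transvections_subset_mat_gen_w_mat) auto
  then show "SL n \<subseteq> mat_gen n ?S"
    by (rule SL_subset_mat_gen)
qed

end
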